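(* Write $n=6m+b$ with integers $m\ge0$ and $0\le b\le5$. The number of nonzero terms of $H_n(x)$ is $m+2$ if $b=4$, and $m+1$ otherwise.
   Context: For $n\ge1$ let $\Xi_n$ be the poset on $\{x_1,\dots,x_n\}$ whose cover relations are exactly: $x_2\prec x_1$, $x_3\prec x_2$, and for $3\le i\le n-1$, $x_i\prec x_{i+1}$ if $i$ is odd and $x_{i+1}\prec x_i$ if $i$ is even (so $x_1>x_2>x_3<x_4>x_5<\cdots$). A filter of a poset is an up-closed subset. The matchable Lucas cube $\Omega_n$ is the graph whose vertices are the filters of $\Xi_n$, two filters adjacent iff one is obtained from the other by deleting a single element; $\Omega_0$ is the one-vertex graph. $h_{n,k}$ is the number of maximal induced $k$-dimensional hypercubes in $\Omega_n$ (induced $k$-cubes not contained in an induced $(k+1)$-cube), and $H_n(x)=\sum_{k\ge0}h_{n,k}x^k$. *)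

theory Defs
  imports Main
begin

(* Elements x_1..x_n of Xi_n are represented by the naturals 1..n.
   xi_cover n i j  means  x_i \<prec> x_j  (x_j covers x_i). *)
definition xi_cover :: "nat \<Rightarrow> nat \<Rightarrow> nat \<Rightarrow> bool" where
  "xi_cover n i j \<longleftrightarrow> 1 \<le> i \<and> i \<le> n \<and> 1 \<le> j \<and> j \<le> n \<and>
     ((i = 2 \<and> j = 1) \<or> (i = 3 \<and> j = 2) \<or>
      (\<exists>l. 3 \<le> l \<and> l \<le> n - 1 \<and>
         ((odd l \<and> i = l \<and> j = l + 1) \<or> (even l \<and> i = l + 1 \<and> j = l))))"

definition xi_le :: "nat \<Rightarrow> nat \<Rightarrow> nat \<Rightarrow> bool" where
  "xi_le n = (xi_cover n)\<^sup>*\<^sup>*"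

definition is_filter :: "nat \<Rightarrow> nat set \<Rightarrow> bool" where
  "is_filter n F \<longleftrightarrow> F \<subseteq> {1..n} \<and>
     (\<forall>x\<in>F. \<forall>y\<in>{1..n}. xi_le n x y \<longrightarrow> y \<in> F)"

definition omega_vertices :: "nat \<Rightarrow> nat set set" where
  "omega_vertices n = {F. is_filter n F}"

definition omega_adj :: "nat set \<Rightarrow> nat set \<Rightarrow> bool" where
  "omega_adj A B \<longleftrightarrow> (\<exists>a\<in>A. B = A - {a}) \<or> (\<exists>b\<in>B. A = B - {b})"

definition induced_cube ::
  "'v set \<Rightarrow> ('v \<Rightarrow> 'v \<Rightarrow> bool) \<Rightarrow> nat \<Rightarrow> 'v set \<Rightarrow> bool" where
  "induced_cube V adj k S \<longleftrightarrow> S \<subseteq> V \<and>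
     (\<exists>f. bij_betw f (Pow {..<k}) S \<and>
        (\<forall>X\<in>Pow {..<k}. \<forall>Y\<in>Pow {..<k}.
            adj (f X) (f Y) \<longleftrightarrow> card ((X - Y) \<union> (Y - X)) = 1))"

definition maximal_induced_cube ::
  "'v set \<Rightarrow> ('v \<Rightarrow> 'v \<Rightarrow> bool) \<Rightarrow> nat \<Rightarrow> 'v set \<Rightarrow> bool" where
  "maximal_induced_cube V adj k S \<longleftrightarrow> induced_cube V adj k S \<and>
     \<not> (\<exists>T. induced_cube V adj (Suc k) T \<and> S \<subseteq> T)"

definition h :: "nat \<Rightarrow> nat \<Rightarrow> nat" where
  "h n k = card {S. maximal_induced_cube (omega_vertices n) omega_adj k S}"

(* number of nonzero terms of H_n(x) = sum_k h_{n,k} x^k *)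
definition H_nonzero_terms :: "nat \<Rightarrow> nat" where
  "H_nonzero_terms n = card {k. h n k \<noteq> 0}"

end

theory Submission
  imports Defs
begin

(* An induced k-cube of the subset graph is an interval {B \<union> D | D \<subseteq> C} with B \<inter> C = {} and
   |C| = k.  Its members are filters of \<Xi>_n iff B is a filter and every upper cover of an
   element of C lies in B, and it is maximal iff no further element can be made free.  The Hasse
   diagram of \<Xi>_n is the path x_1 - x_2 - ... - x_n; free elements are never adjacent on it,
   whence 2|C| \<le> n, and in a maximal cube every element except x_1 or x_3 is adjacent or equal
   to a free one, whence n \<le> 3|C| + 1.  Conversely, for n \<noteq> 1 every k in this range occurs:
   cubes with x_n free extend to \<Xi>_(n+2) and \<Xi>_(n+3) with one more free element.  So the
   nonzero coefficients of H_n are those with (n+1)/3 \<le> k \<le> n/2, and counting them gives the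
   theorem. *)

section \<open>Induced cubes of the subset graph\<close>

definition subcube :: "'a set \<Rightarrow> 'a set \<Rightarrow> 'a set set" where
  "subcube B C = (\<lambda>D. B \<union> D) ` Pow C"

lemma sym_diff_eq_iff: "sym_diff A B = C \<longleftrightarrow> B = sym_diff A C"
  by (auto simp: set_eq_iff)

lemma sym_diff_assoc: "sym_diff (sym_diff A B) C = sym_diff A (sym_diff B C)"
  by (auto simp: set_eq_iff)

lemma omega_adj_iff_card_sym_diff: "omega_adj A B \<longleftrightarrow> card (sym_diff A B) = 1"
proof -
  have "omega_adj A B \<longleftrightarrow> (\<exists>e. B = sym_diff A {e})"
    unfolding omega_adj_def by (auto simp: insert_absorb)
  then show ?thesis
    by (simp add: card_1_singleton_iff sym_diff_eq_iff)
qed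

lemma sym_diff_square:
  assumes "a \<noteq> b" "Q \<noteq> P"
    and a: "card (sym_diff Q (sym_diff P {a})) = 1" and b: "card (sym_diff Q (sym_diff P {b})) = 1"
  shows "Q = sym_diff P {a, b}"
proof -
  obtain e1 e2 where "sym_diff Q (sym_diff P {a}) = {e1}" "sym_diff Q (sym_diff P {b}) = {e2}"
    using a b by (auto simp: card_1_singleton_iff)
  then have "sym_diff Q P = sym_diff {a} {e1}" "sym_diff Q P = sym_diff {b} {e2}"
    by (auto simp: sym_diff_eq_iff)
  moreover have "sym_diff Q P \<noteq> {}" using \<open>Q \<noteq> P\<close> by blast
  ultimately have "sym_diff Q P = {a, b}" using \<open>a \<noteq> b\<close> by (auto split: if_splits)
  then show ?thesis by (auto simp: sym_diff_eq_iff)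
qed

lemma hypercube_embedding_insert:
  fixes f :: "'i set \<Rightarrow> 'a set"
  assumes inj: "inj_on f (Pow I)"
    and adj: "\<And>X Y. X \<subseteq> I \<Longrightarrow> Y \<subseteq> I \<Longrightarrow> card (sym_diff X Y) = 1 \<Longrightarrow>
                card (sym_diff (f X) (f Y)) = 1"
    and "finite X" "X \<subseteq> I"
  shows "\<forall>i\<in>I - X. f (insert i X) = sym_diff (f X) (sym_diff (f {}) (f {i}))"
  using \<open>finite X\<close> \<open>X \<subseteq> I\<close>
proof (induction X rule: finite_induct)
  case empty
  show ?case by (auto simp: sym_diff_eq_iff)
next
  case (insert j Y)
  show ?case
  proof
    fix i assume i: "i \<in> I - insert j Y"
    have j: "j \<in> I" and Y: "Y \<subseteq> I" using insert.prems by auto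
    have single: "\<exists>e. sym_diff (f {}) (f {k}) = {e}" if "k \<in> I" for k
      using adj[of "{}" "{k}"] that by (simp add: card_1_singleton_iff)
    obtain a where a: "sym_diff (f {}) (f {i}) = {a}" using single i by blast
    obtain b where b: "sym_diff (f {}) (f {j}) = {b}" using single j by blast
    have fi: "f (insert i Y) = sym_diff (f Y) {a}" and fj: "f (insert j Y) = sym_diff (f Y) {b}"
      using insert.IH Y i j insert.hyps a b by auto
    have "f (insert i Y) \<noteq> f (insert j Y)"
      using inj i j Y by (auto dest: inj_onD)
    then have "a \<noteq> b" using fi fj by auto
    have ne: "f (insert i (insert j Y)) \<noteq> f Y"
      using inj i j Y by (auto dest: inj_onD)
    have "sym_diff (insert i (insert j Y)) (insert i Y) = {j}"
      "sym_diff (insert i (insert j Y)) (insert j Y) = {i}"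
      using i insert.hyps by auto
    then have "card (sym_diff (f (insert i (insert j Y))) (sym_diff (f Y) {a})) = 1"
      "card (sym_diff (f (insert i (insert j Y))) (sym_diff (f Y) {b})) = 1"
      using adj[of "insert i (insert j Y)" "insert i Y"] adj[of "insert i (insert j Y)" "insert j Y"]
        i j Y fi fj by simp_all
    with ne have "f (insert i (insert j Y)) = sym_diff (f Y) {a, b}"
      using sym_diff_square[OF \<open>a \<noteq> b\<close>] by blast
    then show "f (insert i (insert j Y)) = sym_diff (f (insert j Y)) (sym_diff (f {}) (f {i}))"
      using fj a \<open>a \<noteq> b\<close> by auto
  qed
qed

lemma hypercube_embedding_sym_diff:
  fixes f :: "'i set \<Rightarrow> 'a set"
  assumes inj: "inj_on f (Pow I)"
    and adj: "\<And>X Y. X \<subseteq> I \<Longrightarrow> Y \<subseteq> I \<Longrightarrow> card (sym_diff X Y) = 1 \<Longrightarrow>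
                card (sym_diff (f X) (f Y)) = 1"
    and "finite I"
  obtains \<phi> where "inj_on \<phi> I" "\<And>X. X \<subseteq> I \<Longrightarrow> f X = sym_diff (f {}) (\<phi> ` X)"
proof -
  define \<phi> where "\<phi> i = the_elem (sym_diff (f {}) (f {i}))" for i
  have \<phi>: "sym_diff (f {}) (f {i}) = {\<phi> i}" if i: "i \<in> I" for i
  proof -
    obtain e where "sym_diff (f {}) (f {i}) = {e}"
      using adj[of "{}" "{i}"] i by (auto simp: card_1_singleton_iff)
    then show ?thesis unfolding \<phi>_def by simp
  qed
  have "\<phi> i = \<phi> j \<Longrightarrow> i = j" if "i \<in> I" "j \<in> I" for i j
    using \<phi>[OF that(1)] \<phi>[OF that(2)] inj_onD[OF inj, of "{i}" "{j}"] that
    by (auto simp: sym_diff_eq_iff)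
  then have "inj_on \<phi> I" by (rule inj_onI)
  moreover have "f X = sym_diff (f {}) (\<phi> ` X)" if "X \<subseteq> I" for X
    using finite_subset[OF that \<open>finite I\<close>] that
  proof (induction X rule: finite_induct)
    case empty
    show ?case by simp
  next
    case (insert i X)
    have "\<phi> i \<notin> \<phi> ` X"
      using \<open>inj_on \<phi> I\<close> insert by (auto dest: inj_onD)
    have "f (insert i X) = sym_diff (f X) {\<phi> i}"
      using hypercube_embedding_insert[OF inj adj, of X] insert \<phi> by simp
    also have "\<dots> = sym_diff (f {}) (sym_diff (\<phi> ` X) {\<phi> i})"
      using insert by (simp add: sym_diff_assoc)
    also have "sym_diff (\<phi> ` X) {\<phi> i} = \<phi> ` insert i X"
      using \<open>\<phi> i \<notin> \<phi> ` X\<close> by auto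
    finally show ?case .
  qed
  ultimately show ?thesis using that by blast
qed

lemma sym_diff_image_Pow: "sym_diff F ` Pow C = subcube (F - C) C"
proof (intro equalityI subsetI)
  fix A assume "A \<in> sym_diff F ` Pow C"
  then obtain W where "W \<subseteq> C" "A = sym_diff F W" by auto
  then have "A = (F - C) \<union> sym_diff (F \<inter> C) W" "sym_diff (F \<inter> C) W \<subseteq> C" by auto
  then show "A \<in> subcube (F - C) C" unfolding subcube_def by blast
next
  fix A assume "A \<in> subcube (F - C) C"
  then obtain D where "D \<subseteq> C" "A = (F - C) \<union> D" unfolding subcube_def by auto
  then have "A = sym_diff F (sym_diff (F \<inter> C) D)" "sym_diff (F \<inter> C) D \<subseteq> C" by auto
  then show "A \<in> sym_diff F ` Pow C" by blast
qed

lemma induced_cube_imp_subcube: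
  assumes "induced_cube V omega_adj k S"
  obtains B C where "B \<inter> C = {}" "finite C" "card C = k" "S = subcube B C"
proof -
  obtain f where bij: "bij_betw f (Pow {..<k}) S"
    and adj: "\<And>X Y. X \<subseteq> {..<k} \<Longrightarrow> Y \<subseteq> {..<k} \<Longrightarrow>
                card (sym_diff (f X) (f Y)) = 1 \<longleftrightarrow> card (sym_diff X Y) = 1"
    using assms unfolding induced_cube_def omega_adj_iff_card_sym_diff by auto
  obtain \<phi> where \<phi>: "inj_on \<phi> {..<k}" and f: "\<And>X. X \<subseteq> {..<k} \<Longrightarrow> f X = sym_diff (f {}) (\<phi> ` X)"
    using hypercube_embedding_sym_diff[of f "{..<k}"] bij adj by (auto simp: bij_betw_def)
  define C where "C = \<phi> ` {..<k}"
  have "S = f ` Pow {..<k}" using bij by (simp add: bij_betw_def)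
  also have "\<dots> = (\<lambda>X. sym_diff (f {}) (\<phi> ` X)) ` Pow {..<k}"
    by (intro image_cong refl f) simp
  also have "\<dots> = sym_diff (f {}) ` (image \<phi> ` Pow {..<k})"
    unfolding image_image ..
  also have "image \<phi> ` Pow {..<k} = Pow C"
    unfolding C_def by (rule image_Pow_surj) simp
  finally have "S = subcube (f {} - C) C" by (simp add: sym_diff_image_Pow)
  moreover have "finite C" "card C = k" unfolding C_def using card_image[OF \<phi>] by simp_all
  ultimately show ?thesis using that[of "f {} - C" C] C_def by blast
qed

lemma subcube_induced_cube:
  assumes "B \<inter> C = {}" "finite C" "subcube B C \<subseteq> V"
  shows "induced_cube V omega_adj (card C) (subcube B C)"
proof -
  obtain \<psi> where \<psi>: "bij_betw \<psi> {..<card C} C"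
    using ex_bij_betw_nat_finite[OF \<open>finite C\<close>] by (auto simp: atLeast0LessThan)
  define f where "f X = B \<union> \<psi> ` X" for X
  have sym_diff_f: "sym_diff (f X) (f Y) = \<psi> ` sym_diff X Y"
    if "X \<subseteq> {..<card C}" "Y \<subseteq> {..<card C}" for X Y
  proof -
    have "\<psi> ` X \<subseteq> C" "\<psi> ` Y \<subseteq> C" using that \<psi> by (auto simp: bij_betw_def)
    then have "sym_diff (f X) (f Y) = sym_diff (\<psi> ` X) (\<psi> ` Y)"
      using \<open>B \<inter> C = {}\<close> unfolding f_def by blast
    also have "\<dots> = \<psi> ` sym_diff X Y"
      using inj_on_image_set_diff[of \<psi> "{..<card C}" X Y] inj_on_image_set_diff[of \<psi> "{..<card C}" Y X]
        \<psi> that by (auto simp: bij_betw_def image_Un)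
    finally show ?thesis .
  qed
  have inj: "inj_on f (Pow {..<card C})"
  proof (rule inj_onI)
    fix X Y assume "X \<in> Pow {..<card C}" "Y \<in> Pow {..<card C}" "f X = f Y"
    then have "\<psi> ` sym_diff X Y = {}" using sym_diff_f[of X Y] by simp
    then show "X = Y" by blast
  qed
  have "f ` Pow {..<card C} = (\<lambda>D. B \<union> D) ` (image \<psi> ` Pow {..<card C})"
    unfolding f_def image_image ..
  also have "image \<psi> ` Pow {..<card C} = Pow C"
    using \<psi> by (intro image_Pow_surj) (simp add: bij_betw_def)
  finally have image: "f ` Pow {..<card C} = subcube B C" unfolding subcube_def .
  have card: "card (sym_diff (f X) (f Y)) = card (sym_diff X Y)"
    if "X \<subseteq> {..<card C}" "Y \<subseteq> {..<card C}" for X Y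
    using sym_diff_f[OF that] \<psi> that
    by (auto simp: bij_betw_def intro!: card_image inj_on_subset[of \<psi> "{..<card C}"])
  show ?thesis
    using assms inj image card
    unfolding induced_cube_def omega_adj_iff_card_sym_diff bij_betw_def by auto
qed

lemma subcube_subset_iff:
  assumes "B \<inter> C = {}" "B' \<inter> C' = {}"
  shows "subcube B C \<subseteq> subcube B' C' \<longleftrightarrow> B' \<subseteq> B \<and> B \<union> C \<subseteq> B' \<union> C'"
proof
  assume sub: "subcube B C \<subseteq> subcube B' C'"
  have "B \<in> subcube B' C'" "B \<union> C \<in> subcube B' C'"
    using sub unfolding subcube_def by auto
  with \<open>B' \<inter> C' = {}\<close> show "B' \<subseteq> B \<and> B \<union> C \<subseteq> B' \<union> C'"
    unfolding subcube_def by auto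
next
  assume "B' \<subseteq> B \<and> B \<union> C \<subseteq> B' \<union> C'"
  then have "B \<union> D \<in> subcube B' C'" if "D \<subseteq> C" for D
    unfolding subcube_def using that by (intro image_eqI[of _ _ "B \<union> D - B'"]) blast+
  then show "subcube B C \<subseteq> subcube B' C'" by (auto simp: subcube_def)
qed

section \<open>Maximal cubes of up-closed sets\<close>

definition up_closed_sets :: "'a set \<Rightarrow> ('a \<Rightarrow> 'a \<Rightarrow> bool) \<Rightarrow> 'a set set" where
  "up_closed_sets G r = {F. F \<subseteq> G \<and> (\<forall>x y. r x y \<longrightarrow> x \<in> F \<longrightarrow> y \<in> F)}"

definition filter_cube :: "'a set \<Rightarrow> ('a \<Rightarrow> 'a \<Rightarrow> bool) \<Rightarrow> 'a set \<Rightarrow> 'a set \<Rightarrow> bool" where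
  "filter_cube G r B C \<longleftrightarrow> B \<inter> C = {} \<and> B \<union> C \<subseteq> G \<and> (\<forall>x y. r x y \<longrightarrow> x \<in> B \<union> C \<longrightarrow> y \<in> B)"

(* Local form of maximality (see maximal_filter_cube_iff_no_larger): no element outside B \<union> C
   can be made free, and no element can be released from B. *)
definition maximal_filter_cube :: "'a set \<Rightarrow> ('a \<Rightarrow> 'a \<Rightarrow> bool) \<Rightarrow> 'a set \<Rightarrow> 'a set \<Rightarrow> bool" where
  "maximal_filter_cube G r B C \<longleftrightarrow> filter_cube G r B C \<and>
     (\<forall>y\<in>G - (B \<union> C). \<exists>z. r y z \<and> z \<notin> B) \<and> (\<forall>y\<in>B. \<exists>x. r x y \<and> x \<in> B \<union> C)"

lemma filter_cube_disjoint: "filter_cube G r B C \<Longrightarrow> B \<inter> C = {}"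
  unfolding filter_cube_def by blast

lemma filter_cube_finite: "finite G \<Longrightarrow> filter_cube G r B C \<Longrightarrow> finite C"
  unfolding filter_cube_def by (auto intro: finite_subset)

lemma filter_cube_cover_free:
  "filter_cube G r B C \<Longrightarrow> r x y \<Longrightarrow> x \<in> C \<Longrightarrow> y \<notin> C"
  unfolding filter_cube_def by blast

lemma subcube_subset_up_closed_sets_iff:
  assumes "irreflp r" "B \<inter> C = {}"
  shows "subcube B C \<subseteq> up_closed_sets G r \<longleftrightarrow> filter_cube G r B C"
proof
  assume "subcube B C \<subseteq> up_closed_sets G r"
  then have closed: "B \<union> D \<in> up_closed_sets G r" if "D \<subseteq> C" for D
    using that unfolding subcube_def by blast
  from closed[of "{}"] closed[of "{c}" for c] \<open>irreflp r\<close> \<open>B \<inter> C = {}\<close>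
  show "filter_cube G r B C"
    unfolding filter_cube_def up_closed_sets_def irreflp_def by blast
next
  assume "filter_cube G r B C"
  then show "subcube B C \<subseteq> up_closed_sets G r"
    unfolding filter_cube_def up_closed_sets_def subcube_def by blast
qed

lemma filter_cube_insert_free:
  "filter_cube G r B C \<Longrightarrow> y \<in> G - (B \<union> C) \<Longrightarrow> \<forall>z. r y z \<longrightarrow> z \<in> B \<Longrightarrow>
    filter_cube G r B (insert y C)"
  unfolding filter_cube_def by blast

lemma filter_cube_release:
  "irreflp r \<Longrightarrow> filter_cube G r B C \<Longrightarrow> y \<in> B \<Longrightarrow> \<forall>x. r x y \<longrightarrow> x \<notin> B \<union> C \<Longrightarrow>
    filter_cube G r (B - {y}) (insert y C)"
  unfolding filter_cube_def irreflp_def by blast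

lemma maximal_filter_cube_free_subset:
  assumes "maximal_filter_cube G r B C" "filter_cube G r B' C'" "B' \<subseteq> B" "B \<union> C \<subseteq> B' \<union> C'"
  shows "C' \<subseteq> C"
proof
  fix y assume "y \<in> C'"
  then have "y \<notin> B'" "y \<in> G" and up: "\<And>z. r y z \<Longrightarrow> z \<in> B'"
    using assms(2) unfolding filter_cube_def by blast+
  show "y \<in> C"
  proof (rule ccontr)
    assume "y \<notin> C"
    show False
    proof (cases "y \<in> B")
      case True
      then obtain x where "r x y" "x \<in> B \<union> C" using assms(1) unfolding maximal_filter_cube_def by blast
      then show False using assms(2,4) \<open>y \<notin> B'\<close> unfolding filter_cube_def by blast
    next
      case False
      then obtain z where "r y z" "z \<notin> B"
        using assms(1) \<open>y \<in> G\<close> \<open>y \<notin> C\<close> unfolding maximal_filter_cube_def by blast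
      then show False using up assms(3) by blast
    qed
  qed
qed

lemma maximal_filter_cube_iff_no_larger:
  assumes "finite G" "irreflp r"
  shows "maximal_filter_cube G r B C \<longleftrightarrow> filter_cube G r B C \<and>
    \<not> (\<exists>B' C'. filter_cube G r B' C' \<and> B' \<subseteq> B \<and> B \<union> C \<subseteq> B' \<union> C' \<and> card C' = Suc (card C))"
proof (intro iffI conjI notI)
  assume max: "maximal_filter_cube G r B C"
  then show cube: "filter_cube G r B C" unfolding maximal_filter_cube_def by simp
  assume "\<exists>B' C'. filter_cube G r B' C' \<and> B' \<subseteq> B \<and> B \<union> C \<subseteq> B' \<union> C' \<and> card C' = Suc (card C)"
  then obtain B' C' where "C' \<subseteq> C" "card C' = Suc (card C)"
    using maximal_filter_cube_free_subset[OF max] by blast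
  moreover have "finite C" using filter_cube_finite[OF \<open>finite G\<close> cube] .
  ultimately have "Suc (card C) \<le> card C" by (metis card_mono)
  then show False by simp
next
  assume "filter_cube G r B C \<and>
    \<not> (\<exists>B' C'. filter_cube G r B' C' \<and> B' \<subseteq> B \<and> B \<union> C \<subseteq> B' \<union> C' \<and> card C' = Suc (card C))"
  then have cube: "filter_cube G r B C"
    and no_larger: "\<And>B' C'. filter_cube G r B' C' \<Longrightarrow> B' \<subseteq> B \<Longrightarrow> B \<union> C \<subseteq> B' \<union> C' \<Longrightarrow>
                       card C' \<noteq> Suc (card C)" by blast+
  have "finite C" "B \<inter> C = {}"
    using filter_cube_finite[OF \<open>finite G\<close> cube] filter_cube_disjoint[OF cube] .
  have "\<exists>z. r y z \<and> z \<notin> B" if y: "y \<in> G - (B \<union> C)" for y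
    using no_larger[of B "insert y C"] filter_cube_insert_free[OF cube y] y \<open>finite C\<close> by auto
  moreover have "\<exists>x. r x y \<and> x \<in> B \<union> C" if y: "y \<in> B" for y
  proof -
    have "y \<notin> C" using y \<open>B \<inter> C = {}\<close> by blast
    then show ?thesis
      using no_larger[of "B - {y}" "insert y C"] filter_cube_release[OF \<open>irreflp r\<close> cube y]
        y \<open>finite C\<close> by auto
  qed
  ultimately show "maximal_filter_cube G r B C"
    using cube unfolding maximal_filter_cube_def by blast
qed

lemma maximal_filter_cube_extend:
  assumes max: "maximal_filter_cube G r B C"
    and r_G: "\<And>x y. r x y \<Longrightarrow> x \<in> G \<and> y \<in> G"
    and r': "\<And>x y. x \<in> G \<Longrightarrow> y \<in> G \<Longrightarrow> r' x y \<longleftrightarrow> r x y"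
    and new: "G \<subseteq> G'" "B' \<union> C' \<subseteq> G' - G" "B' \<inter> C' = {}"
    and boundary: "\<And>x y. r' x y \<Longrightarrow> x \<in> B \<union> B' \<union> C \<union> C' \<Longrightarrow> x \<notin> G \<or> y \<notin> G \<Longrightarrow> y \<in> B \<union> B'"
    and free: "\<And>y. y \<in> G' - G - (B' \<union> C') \<Longrightarrow> \<exists>z. r' y z \<and> z \<notin> B \<union> B'"
    and base: "\<And>y. y \<in> B' \<Longrightarrow> \<exists>x. r' x y \<and> x \<in> B \<union> B' \<union> C \<union> C'"
  shows "maximal_filter_cube G' r' (B \<union> B') (C \<union> C')"
proof -
  have cube: "B \<inter> C = {}" "B \<union> C \<subseteq> G" "\<And>x y. r x y \<Longrightarrow> x \<in> B \<union> C \<Longrightarrow> y \<in> B"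
    using max unfolding maximal_filter_cube_def filter_cube_def by blast+
  have "filter_cube G' r' (B \<union> B') (C \<union> C')"
    unfolding filter_cube_def
  proof (intro conjI allI impI)
    show "(B \<union> B') \<inter> (C \<union> C') = {}" "B \<union> B' \<union> (C \<union> C') \<subseteq> G'"
      using cube new by blast+
    fix x y assume xy: "r' x y" "x \<in> B \<union> B' \<union> (C \<union> C')"
    show "y \<in> B \<union> B'"
    proof (cases "x \<in> G \<and> y \<in> G")
      case True
      then have "r x y" "x \<in> B \<union> C" using xy r' new by auto
      then show ?thesis using cube(3) by blast
    next
      case False
      then show ?thesis using boundary xy by blast
    qed
  qed
  moreover have "\<exists>z. r' y z \<and> z \<notin> B \<union> B'" if y: "y \<in> G' - (B \<union> B' \<union> (C \<union> C'))" for y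
  proof (cases "y \<in> G")
    case True
    then obtain z where "r y z" "z \<notin> B"
      using max y unfolding maximal_filter_cube_def by blast
    then show ?thesis using r_G r' new by blast
  next
    case False
    then show ?thesis using free y by blast
  qed
  moreover have "\<exists>x. r' x y \<and> x \<in> B \<union> B' \<union> (C \<union> C')" if y: "y \<in> B \<union> B'" for y
  proof (cases "y \<in> B")
    case True
    then obtain x where "r x y" "x \<in> B \<union> C"
      using max unfolding maximal_filter_cube_def by blast
    then show ?thesis using r_G r' by blast
  next
    case False
    then show ?thesis using base y by blast
  qed
  ultimately show ?thesis unfolding maximal_filter_cube_def by blast
qed

lemma induced_cube_up_closed_sets_iff:
  assumes "finite G" "irreflp r"
  shows "induced_cube (up_closed_sets G r) omega_adj k S \<longleftrightarrow>
    (\<exists>B C. filter_cube G r B C \<and> card C = k \<and> S = subcube B C)"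
proof
  assume S: "induced_cube (up_closed_sets G r) omega_adj k S"
  then obtain B C where "B \<inter> C = {}" "card C = k" "S = subcube B C"
    by (rule induced_cube_imp_subcube)
  moreover have "S \<subseteq> up_closed_sets G r" using S unfolding induced_cube_def by simp
  ultimately show "\<exists>B C. filter_cube G r B C \<and> card C = k \<and> S = subcube B C"
    using subcube_subset_up_closed_sets_iff[OF \<open>irreflp r\<close>] by blast
next
  assume "\<exists>B C. filter_cube G r B C \<and> card C = k \<and> S = subcube B C"
  then obtain B C where cube: "filter_cube G r B C" and "card C = k" "S = subcube B C" by blast
  moreover have BC: "B \<inter> C = {}" "finite C"
    using filter_cube_disjoint[OF cube] filter_cube_finite[OF \<open>finite G\<close> cube] .
  moreover have "subcube B C \<subseteq> up_closed_sets G r"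
    using subcube_subset_up_closed_sets_iff[OF \<open>irreflp r\<close> BC(1)] cube by simp
  ultimately show "induced_cube (up_closed_sets G r) omega_adj k S"
    using subcube_induced_cube[OF BC] by simp
qed

theorem ex_maximal_induced_cube_up_closed_sets_iff:
  assumes "finite G" "irreflp r"
  shows "(\<exists>S. maximal_induced_cube (up_closed_sets G r) omega_adj k S) \<longleftrightarrow>
         (\<exists>B C. maximal_filter_cube G r B C \<and> card C = k)"
proof -
  let ?V = "up_closed_sets G r"
  have larger_iff: "(\<exists>T. induced_cube ?V omega_adj (Suc k) T \<and> subcube B C \<subseteq> T) \<longleftrightarrow>
      (\<exists>B' C'. filter_cube G r B' C' \<and> B' \<subseteq> B \<and> B \<union> C \<subseteq> B' \<union> C' \<and> card C' = Suc k)"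
    if "filter_cube G r B C" for B C
  proof -
    have "subcube B C \<subseteq> subcube B' C' \<longleftrightarrow> B' \<subseteq> B \<and> B \<union> C \<subseteq> B' \<union> C'"
      if "filter_cube G r B' C'" for B' C'
      by (rule subcube_subset_iff[OF filter_cube_disjoint filter_cube_disjoint]) fact+
    then show ?thesis unfolding induced_cube_up_closed_sets_iff[OF assms] by blast
  qed
  have "(\<exists>S. maximal_induced_cube ?V omega_adj k S) \<longleftrightarrow>
      (\<exists>B C. filter_cube G r B C \<and> card C = k \<and>
        \<not> (\<exists>T. induced_cube ?V omega_adj (Suc k) T \<and> subcube B C \<subseteq> T))"
    unfolding maximal_induced_cube_def induced_cube_up_closed_sets_iff[OF assms] by blast
  also have "\<dots> \<longleftrightarrow> (\<exists>B C. maximal_filter_cube G r B C \<and> card C = k)"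
  proof -
    have "filter_cube G r B C \<and> card C = k \<and>
        \<not> (\<exists>T. induced_cube ?V omega_adj (Suc k) T \<and> subcube B C \<subseteq> T) \<longleftrightarrow>
      maximal_filter_cube G r B C \<and> card C = k" for B C
      using larger_iff[of B C] maximal_filter_cube_iff_no_larger[OF assms, of B C] by blast
    then show ?thesis by blast
  qed
  finally show ?thesis .
qed

section \<open>The zigzag poset \<Xi>_n\<close>

(* The covers of \<Xi>_n with the bound n dropped: x_1 > x_2 > x_3 < x_4 > x_5 < x_6 > ... *)
definition zigzag_cover :: "nat \<Rightarrow> nat \<Rightarrow> bool" where
  "zigzag_cover i j \<longleftrightarrow> (i = 2 \<and> j = 1) \<or> (i = 3 \<and> j = 2) \<or>
     (3 \<le> i \<and> odd i \<and> j = i + 1) \<or> (4 \<le> j \<and> even j \<and> i = j + 1)"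

lemma xi_cover_iff: "xi_cover n i j \<longleftrightarrow> i \<le> n \<and> j \<le> n \<and> zigzag_cover i j"
proof
  assume "xi_cover n i j"
  moreover have "even l \<Longrightarrow> 3 \<le> l \<Longrightarrow> 4 \<le> l" for l :: nat by presburger
  ultimately show "i \<le> n \<and> j \<le> n \<and> zigzag_cover i j"
    unfolding xi_cover_def zigzag_cover_def by fastforce
next
  assume "i \<le> n \<and> j \<le> n \<and> zigzag_cover i j"
  then show "xi_cover n i j"
    unfolding xi_cover_def zigzag_cover_def
    by (elim conjE disjE) (auto intro: exI[of _ i] exI[of _ j])
qed

lemma xi_cover_in_range: "xi_cover n i j \<Longrightarrow> i \<in> {1..n} \<and> j \<in> {1..n}"
  unfolding xi_cover_def by simp

lemma irreflp_xi_cover: "irreflp (xi_cover n)"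
  unfolding irreflp_def xi_cover_iff zigzag_cover_def by auto

lemma zigzag_cover_adjacent: "zigzag_cover x y \<Longrightarrow> x = y + 1 \<or> y = x + 1"
  unfolding zigzag_cover_def by auto

lemma zigzag_cover_minimal: "odd y \<Longrightarrow> 3 \<le> y \<Longrightarrow> \<not> zigzag_cover x y"
  unfolding zigzag_cover_def by auto

lemma zigzag_cover_maximal: "z = 1 \<or> (even z \<and> 4 \<le> z) \<Longrightarrow> \<not> zigzag_cover z w"
  unfolding zigzag_cover_def by auto

lemma zigzag_cover_lower: "zigzag_cover x y \<Longrightarrow> 2 \<le> y \<Longrightarrow> odd x \<and> 3 \<le> x"
  unfolding zigzag_cover_def by auto

lemma zigzag_cover_upper: "zigzag_cover y z \<Longrightarrow> y \<noteq> 3 \<Longrightarrow> z = 1 \<or> (even z \<and> 4 \<le> z)"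
  unfolding zigzag_cover_def by auto

lemma xi_cover_consecutive: "1 \<le> c \<Longrightarrow> c < n \<Longrightarrow> xi_cover n c (c + 1) \<or> xi_cover n (c + 1) c"
  unfolding xi_cover_iff zigzag_cover_def by presburger

lemma xi_cover_beyond:
  assumes "xi_cover m x y" "3 \<le> n" "n < x \<or> n < y"
  shows "n \<le> x \<and> n \<le> y \<and> x \<le> m \<and> y \<le> m \<and> ((odd x \<and> y = x + 1) \<or> (even y \<and> x = y + 1))"
  using assms unfolding xi_cover_iff zigzag_cover_def by auto

lemma omega_vertices_eq_up_closed_sets: "omega_vertices n = up_closed_sets {1..n} (xi_cover n)"
proof -
  have "(\<forall>x\<in>F. \<forall>y\<in>{1..n}. xi_le n x y \<longrightarrow> y \<in> F) \<longleftrightarrow> (\<forall>x y. xi_cover n x y \<longrightarrow> x \<in> F \<longrightarrow> y \<in> F)"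
    for F
  proof
    assume "\<forall>x\<in>F. \<forall>y\<in>{1..n}. xi_le n x y \<longrightarrow> y \<in> F"
    then show "\<forall>x y. xi_cover n x y \<longrightarrow> x \<in> F \<longrightarrow> y \<in> F"
      unfolding xi_le_def using xi_cover_in_range by blast
  next
    assume step: "\<forall>x y. xi_cover n x y \<longrightarrow> x \<in> F \<longrightarrow> y \<in> F"
    have "y \<in> F" if "(xi_cover n)\<^sup>*\<^sup>* x y" "x \<in> F" for x y
      using that by (induction rule: rtranclp_induct) (use step in blast)+
    then show "\<forall>x\<in>F. \<forall>y\<in>{1..n}. xi_le n x y \<longrightarrow> y \<in> F"
      unfolding xi_le_def by blast
  qed
  then show ?thesis
    unfolding omega_vertices_def up_closed_sets_def is_filter_def by blast
qed

lemma h_neq_zero_iff: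
  "h n k \<noteq> 0 \<longleftrightarrow> (\<exists>B C. maximal_filter_cube {1..n} (xi_cover n) B C \<and> card C = k)"
proof -
  let ?V = "omega_vertices n"
  have "finite ?V"
    unfolding omega_vertices_eq_up_closed_sets up_closed_sets_def by simp
  then have "finite {S. maximal_induced_cube ?V omega_adj k S}"
    unfolding maximal_induced_cube_def induced_cube_def
    by (auto intro: finite_subset[of _ "Pow ?V"])
  then have "h n k \<noteq> 0 \<longleftrightarrow> (\<exists>S. maximal_induced_cube ?V omega_adj k S)"
    unfolding h_def by simp
  then show ?thesis
    unfolding omega_vertices_eq_up_closed_sets
    using ex_maximal_induced_cube_up_closed_sets_iff[OF _ irreflp_xi_cover] by simp
qed

section \<open>Dimensions of maximal cubes of \<Xi>_n\<close>

lemma xi_filter_cube_card_le: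
  assumes cube: "filter_cube {1..n} (xi_cover n) B C" and "n \<noteq> 1"
  shows "2 * card C \<le> n"
proof -
  have C: "C \<subseteq> {1..n}" using cube unfolding filter_cube_def by blast
  have no_consecutive: "c + 1 \<notin> C" if "c \<in> C" for c
    using xi_cover_consecutive[of c n] filter_cube_cover_free[OF cube] that C by fastforce
  have not_1_3: "\<not> (1 \<in> C \<and> 3 \<in> C)"
  proof
    assume "1 \<in> C \<and> 3 \<in> C"
    then have "xi_cover n 3 2" "xi_cover n 2 1" using C unfolding xi_cover_iff zigzag_cover_def by auto
    then have "1 \<in> B" using cube \<open>1 \<in> C \<and> 3 \<in> C\<close> unfolding filter_cube_def by blast
    then show False using cube \<open>1 \<in> C \<and> 3 \<in> C\<close> unfolding filter_cube_def by blast
  qed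
  define g where "g c = (if c \<le> 3 then 1 else c div 2)" for c :: nat
  have "strict_mono_on C g"
  proof (rule strict_mono_onI)
    fix c d assume "c \<in> C" "d \<in> C" "c < d"
    then have "d \<noteq> c + 1" "1 \<le> c" "\<not> (c = 1 \<and> d = 3)"
      using no_consecutive not_1_3 C by auto
    then show "g c < g d" using \<open>c < d\<close> unfolding g_def by auto
  qed
  then have "card C = card (g ` C)" by (simp add: card_image strict_mono_on_imp_inj_on)
  also have "\<dots> \<le> card {1..n div 2}"
  proof (intro card_mono subsetI)
    fix y assume "y \<in> g ` C"
    then obtain c where "y = g c" "1 \<le> c" "c \<le> n" using C by auto
    then show "y \<in> {1..n div 2}" using \<open>n \<noteq> 1\<close> unfolding g_def by (auto; presburger)
  qed simp
  finally show ?thesis by simp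
qed

lemma xi_maximal_cube_minimal_notin:
  "maximal_filter_cube {1..n} (xi_cover n) B C \<Longrightarrow> odd y \<Longrightarrow> 3 \<le> y \<Longrightarrow> y \<notin> B"
  unfolding maximal_filter_cube_def xi_cover_iff using zigzag_cover_minimal by blast

lemma xi_maximal_cube_maximal_in:
  "maximal_filter_cube {1..n} (xi_cover n) B C \<Longrightarrow> y \<in> {1..n} \<Longrightarrow> y = 1 \<or> (even y \<and> 4 \<le> y) \<Longrightarrow>
    y \<in> B \<union> C"
  unfolding maximal_filter_cube_def xi_cover_iff using zigzag_cover_maximal by blast

lemma xi_maximal_cube_near_free:
  assumes max: "maximal_filter_cube {1..n} (xi_cover n) B C" and y: "2 \<le> y" "y \<le> n" "y \<noteq> 3"
  shows "\<exists>c\<in>C. y \<in> {c - 1..c + 1}"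
proof -
  consider "y \<in> C" | "y \<in> B" | "y \<notin> B \<union> C" by blast
  then show ?thesis
  proof cases
    case 1
    then show ?thesis by force
  next
    case 2
    then obtain x where x: "xi_cover n x y" "x \<in> B \<union> C"
      using max unfolding maximal_filter_cube_def by blast
    then have "x \<in> C"
      using zigzag_cover_lower xi_maximal_cube_minimal_notin[OF max] y unfolding xi_cover_iff by blast
    then show ?thesis using zigzag_cover_adjacent x unfolding xi_cover_iff by force
  next
    case 3
    then have "y \<in> {1..n} - (B \<union> C)" using y by auto
    then obtain z where z: "xi_cover n y z" "z \<notin> B"
      using max unfolding maximal_filter_cube_def by blast
    then have "z \<in> C"
      using zigzag_cover_upper xi_maximal_cube_maximal_in[OF max] xi_cover_in_range y
      unfolding xi_cover_iff by blast
    then show ?thesis using zigzag_cover_adjacent z unfolding xi_cover_iff by force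
  qed
qed

lemma xi_maximal_cube_near_1_or_3:
  assumes max: "maximal_filter_cube {1..n} (xi_cover n) B C" and "3 \<le> n"
  shows "\<exists>u\<in>{1, 3}. \<exists>c\<in>C. u \<in> {c - 1..c + 1}"
proof (cases "3 \<in> C")
  case True
  then show ?thesis by force
next
  case False
  have "1 \<in> B \<union> C" using xi_maximal_cube_maximal_in[OF max] \<open>3 \<le> n\<close> by simp
  moreover have "2 \<in> C" if "1 \<in> B"
  proof -
    obtain x where "xi_cover n x 1" "x \<in> B \<union> C"
      using max \<open>1 \<in> B\<close> unfolding maximal_filter_cube_def by blast
    then have "2 \<in> B \<union> C" unfolding xi_cover_iff zigzag_cover_def by auto
    moreover have "2 \<notin> B"
    proof
      assume "2 \<in> B"
      then obtain x' where "xi_cover n x' 2" "x' \<in> B \<union> C"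
        using max unfolding maximal_filter_cube_def by blast
      then have "3 \<in> B \<union> C" unfolding xi_cover_iff zigzag_cover_def by auto
      then show False using \<open>3 \<notin> C\<close> xi_maximal_cube_minimal_notin[OF max, of 3] by simp
    qed
    ultimately show ?thesis by simp
  qed
  ultimately show ?thesis by force
qed

lemma xi_maximal_cube_card_ge:
  assumes max: "maximal_filter_cube {1..n} (xi_cover n) B C"
  shows "n \<le> 3 * card C + 1"
proof -
  define N where "N = (\<Union>c\<in>C. {c - 1..c + 1})"
  have "finite C" using max unfolding maximal_filter_cube_def filter_cube_def
    by (auto intro: finite_subset)
  obtain u where u: "{1..n} - {u} \<subseteq> N"
  proof (cases "3 \<le> n")
    case True
    then obtain v where v: "v \<in> {1, 3}" "v \<in> N"
      using xi_maximal_cube_near_1_or_3[OF max] unfolding N_def by blast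
    have "{1..n} - {4 - v} \<subseteq> N"
    proof
      fix y assume y: "y \<in> {1..n} - {4 - v}"
      show "y \<in> N"
      proof (cases "y = v")
        case True
        then show ?thesis using v by simp
      next
        case False
        then have "2 \<le> y" "y \<noteq> 3" using y v by auto
        then show ?thesis using xi_maximal_cube_near_free[OF max] y unfolding N_def by auto
      qed
    qed
    then show ?thesis by (rule that)
  next
    case False
    have "{1..n} - {1} \<subseteq> N"
    proof
      fix y assume "y \<in> {1..n} - {1}"
      then have "2 \<le> y" "y \<le> n" "y \<noteq> 3" using False by auto
      then show "y \<in> N" using xi_maximal_cube_near_free[OF max] unfolding N_def by auto
    qed
    then show ?thesis by (rule that)
  qed
  have "n - 1 \<le> card ({1..n} - {u})"
    using diff_card_le_card_Diff[of "{u}" "{1..n}"] by simp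
  also have "\<dots> \<le> card N"
    using u \<open>finite C\<close> unfolding N_def by (intro card_mono) auto
  also have "\<dots> \<le> (\<Sum>c\<in>C. card {c - 1..c + 1})"
    unfolding N_def by (rule card_UN_le[OF \<open>finite C\<close>])
  also have "\<dots> \<le> (\<Sum>c\<in>C. 3)"
    by (intro sum_mono) simp
  finally show ?thesis by simp
qed

lemma xi_maximal_cube_extend:
  assumes max: "maximal_filter_cube {1..n} (xi_cover n) B C" and "n \<le> m"
    and new: "B' \<union> C' \<subseteq> {n<..m}" "B' \<inter> C' = {}"
    and boundary: "\<And>x y. xi_cover m x y \<Longrightarrow> x \<in> B \<union> B' \<union> C \<union> C' \<Longrightarrow> n < x \<or> n < y \<Longrightarrow> y \<in> B \<union> B'"
    and free: "\<And>y. y \<in> {n<..m} - (B' \<union> C') \<Longrightarrow> \<exists>z. xi_cover m y z \<and> z \<notin> B \<union> B'"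
    and base: "\<And>y. y \<in> B' \<Longrightarrow> \<exists>x. xi_cover m x y \<and> x \<in> B \<union> B' \<union> C \<union> C'"
  shows "maximal_filter_cube {1..m} (xi_cover m) (B \<union> B') (C \<union> C')"
proof (rule maximal_filter_cube_extend[OF max xi_cover_in_range])
  show "xi_cover m x y \<longleftrightarrow> xi_cover n x y" if "x \<in> {1..n}" "y \<in> {1..n}" for x y
    using that \<open>n \<le> m\<close> by (auto simp: xi_cover_iff)
  show "y \<in> B \<union> B'"
    if "xi_cover m x y" "x \<in> B \<union> B' \<union> C \<union> C'" "x \<notin> {1..n} \<or> y \<notin> {1..n}" for x y
  proof -
    have "n < x \<or> n < y" using that(3) xi_cover_in_range[OF that(1)] by auto
    then show ?thesis using boundary that(1,2) by blast
  qed
qed (use \<open>n \<le> m\<close> new free base in auto)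

(* Maximal cubes in which x_n is free are the ones that extend to the right. *)
definition xi_top_free_cube :: "nat \<Rightarrow> nat \<Rightarrow> bool" where
  "xi_top_free_cube n k \<longleftrightarrow>
     (\<exists>B C. maximal_filter_cube {1..n} (xi_cover n) B C \<and> card C = k \<and> n \<in> C)"

lemma xi_top_free_cubeE:
  assumes "xi_top_free_cube n k"
  obtains B C where "maximal_filter_cube {1..n} (xi_cover n) B C" "card C = k" "n \<in> C"
    "B \<union> C \<subseteq> {1..n}" "n \<notin> B" "finite C"
proof -
  obtain B C where max: "maximal_filter_cube {1..n} (xi_cover n) B C" and "card C = k" "n \<in> C"
    using assms unfolding xi_top_free_cube_def by blast
  moreover from max \<open>n \<in> C\<close> have "B \<union> C \<subseteq> {1..n}" "n \<notin> B" "finite C"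
    unfolding maximal_filter_cube_def filter_cube_def by (auto intro: finite_subset)
  ultimately show ?thesis using that by blast
qed

lemma xi_top_free_cube_add1:
  assumes "xi_top_free_cube n k" "3 \<le> n"
  shows "\<exists>B C. maximal_filter_cube {1..n + 1} (xi_cover (n + 1)) B C \<and> card C = k"
proof -
  obtain B C where max: "maximal_filter_cube {1..n} (xi_cover n) B C" and "card C = k" "n \<in> C"
    and BC: "B \<union> C \<subseteq> {1..n}" "n \<notin> B"
    using assms(1) by (rule xi_top_free_cubeE)
  define B' where "B' = (if odd n then {n + 1} else {})"
  have "maximal_filter_cube {1..n + 1} (xi_cover (n + 1)) (B \<union> B') (C \<union> {})"
  proof (rule xi_maximal_cube_extend[OF max])
    fix x y assume xy: "xi_cover (n + 1) x y" "x \<in> B \<union> B' \<union> C \<union> {}" "n < x \<or> n < y"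
    then have "x = n \<or> (odd n \<and> x = n + 1)"
      using xi_cover_beyond[OF xy(1) \<open>3 \<le> n\<close>] BC by (auto simp: B'_def split: if_splits)
    then have "odd n \<and> y = n + 1"
      using xi_cover_beyond[OF xy(1) \<open>3 \<le> n\<close> xy(3)] by presburger
    then show "y \<in> B \<union> B'" by (simp add: B'_def)
  next
    fix y assume "y \<in> {n<..n + 1} - (B' \<union> {})"
    then have "y = n + 1" "even n" by (auto simp: B'_def split: if_splits)
    then show "\<exists>z. xi_cover (n + 1) y z \<and> z \<notin> B \<union> B'"
      using \<open>3 \<le> n\<close> BC
      by (intro exI[of _ n]) (auto simp: B'_def xi_cover_iff zigzag_cover_def; presburger)
  next
    fix y assume "y \<in> B'"
    then show "\<exists>x. xi_cover (n + 1) x y \<and> x \<in> B \<union> B' \<union> C \<union> {}"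
      using \<open>3 \<le> n\<close> \<open>n \<in> C\<close>
      by (intro exI[of _ n]) (auto simp: B'_def xi_cover_iff zigzag_cover_def split: if_splits)
  qed (auto simp: B'_def)
  then show ?thesis using \<open>card C = k\<close> by auto
qed

lemma xi_top_free_cube_add2:
  assumes "xi_top_free_cube n k" "3 \<le> n"
  shows "xi_top_free_cube (n + 2) (k + 1)"
proof -
  obtain B C where max: "maximal_filter_cube {1..n} (xi_cover n) B C" and "card C = k" "n \<in> C"
    and BC: "B \<union> C \<subseteq> {1..n}" "n \<notin> B" "finite C"
    using assms(1) by (rule xi_top_free_cubeE)
  define B' where "B' = (if odd n then {n + 1} else {})"
  have "maximal_filter_cube {1..n + 2} (xi_cover (n + 2)) (B \<union> B') (C \<union> {n + 2})"
  proof (rule xi_maximal_cube_extend[OF max])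
    fix x y assume xy: "xi_cover (n + 2) x y" "x \<in> B \<union> B' \<union> C \<union> {n + 2}" "n < x \<or> n < y"
    then have "x = n \<or> (odd n \<and> x = n + 1) \<or> x = n + 2"
      using xi_cover_beyond[OF xy(1) \<open>3 \<le> n\<close>] BC by (auto simp: B'_def split: if_splits)
    then have "odd n \<and> y = n + 1"
      using xi_cover_beyond[OF xy(1) \<open>3 \<le> n\<close> xy(3)] by presburger
    then show "y \<in> B \<union> B'" by (simp add: B'_def)
  next
    fix y assume "y \<in> {n<..n + 2} - (B' \<union> {n + 2})"
    then have "y = n + 1" "even n" by (auto simp: B'_def split: if_splits)
    then show "\<exists>z. xi_cover (n + 2) y z \<and> z \<notin> B \<union> B'"
      using \<open>3 \<le> n\<close> BC
      by (intro exI[of _ n]) (auto simp: B'_def xi_cover_iff zigzag_cover_def; presburger)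
  next
    fix y assume "y \<in> B'"
    then show "\<exists>x. xi_cover (n + 2) x y \<and> x \<in> B \<union> B' \<union> C \<union> {n + 2}"
      using \<open>3 \<le> n\<close> \<open>n \<in> C\<close>
      by (intro exI[of _ n]) (auto simp: B'_def xi_cover_iff zigzag_cover_def split: if_splits)
  qed (auto simp: B'_def)
  moreover have "card (C \<union> {n + 2}) = k + 1"
    using BC \<open>card C = k\<close> by (auto simp: card_insert_if)
  ultimately show ?thesis unfolding xi_top_free_cube_def by auto
qed

lemma xi_top_free_cube_add3:
  assumes "xi_top_free_cube n k" "3 \<le> n"
  shows "xi_top_free_cube (n + 3) (k + 1)"
proof -
  obtain B C where max: "maximal_filter_cube {1..n} (xi_cover n) B C" and "card C = k" "n \<in> C"
    and BC: "B \<union> C \<subseteq> {1..n}" "n \<notin> B" "finite C"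
    using assms(1) by (rule xi_top_free_cubeE)
  define b where "b = (if odd n then n + 1 else n + 2)"
  have b: "odd n \<and> b = n + 1 \<or> even n \<and> b = n + 2" by (simp add: b_def)
  have "maximal_filter_cube {1..n + 3} (xi_cover (n + 3)) (B \<union> {b}) (C \<union> {n + 3})"
  proof (rule xi_maximal_cube_extend[OF max])
    fix x y assume xy: "xi_cover (n + 3) x y" "x \<in> B \<union> {b} \<union> C \<union> {n + 3}" "n < x \<or> n < y"
    then have "x = n \<or> x = b \<or> x = n + 3"
      using xi_cover_beyond[OF xy(1) \<open>3 \<le> n\<close>] BC by auto
    then have "y = b"
      using xi_cover_beyond[OF xy(1) \<open>3 \<le> n\<close> xy(3)] b by presburger
    then show "y \<in> B \<union> {b}" by simp
  next
    fix y assume "y \<in> {n<..n + 3} - ({b} \<union> {n + 3})"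
    then have "odd n \<and> y = n + 2 \<or> even n \<and> y = n + 1" using b by auto
    then show "\<exists>z. xi_cover (n + 3) y z \<and> z \<notin> B \<union> {b}"
      using \<open>3 \<le> n\<close> BC b
      by (intro exI[of _ "if odd n then n + 3 else n"]) (auto simp: xi_cover_iff zigzag_cover_def; presburger)
  next
    fix y assume "y \<in> {b}"
    then show "\<exists>x. xi_cover (n + 3) x y \<and> x \<in> B \<union> {b} \<union> C \<union> {n + 3}"
      using \<open>3 \<le> n\<close> \<open>n \<in> C\<close> b
      by (intro exI[of _ "if odd n then n else n + 3"]) (auto simp: xi_cover_iff zigzag_cover_def; presburger)
  qed (use b in auto)
  moreover have "card (C \<union> {n + 3}) = k + 1"
    using BC \<open>card C = k\<close> by (auto simp: card_insert_if)
  ultimately show ?thesis unfolding xi_top_free_cube_def by auto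
qed

lemma xi_top_free_cube_base:
  "xi_top_free_cube 2 1" "xi_top_free_cube 3 1" "xi_top_free_cube 4 2"
proof -
  have "maximal_filter_cube {1..2} (xi_cover 2) {1} {2}"
    unfolding maximal_filter_cube_def filter_cube_def xi_cover_iff zigzag_cover_def by auto
  then show "xi_top_free_cube 2 1" unfolding xi_top_free_cube_def by force
  have "maximal_filter_cube {1..3} (xi_cover 3) {1, 2} {3}"
    unfolding maximal_filter_cube_def filter_cube_def xi_cover_iff zigzag_cover_def
    by (auto; rule exI[of _ 2]; simp)
  then show "xi_top_free_cube 3 1" unfolding xi_top_free_cube_def by force
  have "maximal_filter_cube {1..4} (xi_cover 4) {} {1, 4}"
    unfolding maximal_filter_cube_def filter_cube_def xi_cover_iff zigzag_cover_def
    by (auto; presburger)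
  then show "xi_top_free_cube 4 2" unfolding xi_top_free_cube_def by force
qed

lemma xi_top_free_cube_range: "2 \<le> n \<Longrightarrow> 2 * k \<le> n \<Longrightarrow> n \<le> 3 * k \<Longrightarrow> xi_top_free_cube n k"
proof (induction n arbitrary: k rule: less_induct)
  case (less n)
  consider "n = 2" | "n = 3" | "n = 4" | "5 \<le> n" "n + 1 \<le> 3 * k" | "5 \<le> n" "n = 3 * k"
    using less.prems by linarith
  then show ?case
  proof cases
    case 1
    then have "k = 1" using less.prems by linarith
    then show ?thesis using 1 xi_top_free_cube_base by simp
  next
    case 2
    then have "k = 1" using less.prems by linarith
    then show ?thesis using 2 xi_top_free_cube_base by simp
  next
    case 3
    then have "k = 2" using less.prems by linarith
    then show ?thesis using 3 xi_top_free_cube_base by simp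
  next
    case 4
    then have "n = (n - 2) + 2" "k = (k - 1) + 1" by arith+
    moreover have "xi_top_free_cube (n - 2) (k - 1)" using less 4 by simp
    ultimately show ?thesis using xi_top_free_cube_add2[of "n - 2" "k - 1"] 4 by simp
  next
    case 5
    then have "n = (n - 3) + 3" "k = (k - 1) + 1" "6 \<le> n" by arith+
    moreover have "xi_top_free_cube (n - 3) (k - 1)" using less 5 by simp
    ultimately show ?thesis using xi_top_free_cube_add3[of "n - 3" "k - 1"] by simp
  qed
qed

lemma xi_maximal_cube_dim_iff:
  assumes "n \<noteq> 1"
  shows "(\<exists>B C. maximal_filter_cube {1..n} (xi_cover n) B C \<and> card C = k) \<longleftrightarrow>
         2 * k \<le> n \<and> n \<le> 3 * k + 1"
proof
  assume "\<exists>B C. maximal_filter_cube {1..n} (xi_cover n) B C \<and> card C = k"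
  then show "2 * k \<le> n \<and> n \<le> 3 * k + 1"
    using xi_filter_cube_card_le xi_maximal_cube_card_ge \<open>n \<noteq> 1\<close>
    unfolding maximal_filter_cube_def by blast
next
  assume k: "2 * k \<le> n \<and> n \<le> 3 * k + 1"
  consider "n = 0" | "2 \<le> n" "n \<le> 3 * k" | "n = 3 * k + 1" "1 \<le> k"
    using k \<open>n \<noteq> 1\<close> by linarith
  then show "\<exists>B C. maximal_filter_cube {1..n} (xi_cover n) B C \<and> card C = k"
  proof cases
    case 1
    then have "maximal_filter_cube {1..n} (xi_cover n) {} {}"
      unfolding maximal_filter_cube_def filter_cube_def xi_cover_iff by simp
    then show ?thesis using 1 k by force
  next
    case 2
    then show ?thesis using xi_top_free_cube_range k unfolding xi_top_free_cube_def by blast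
  next
    case 3
    then have "xi_top_free_cube (n - 1) k" by (intro xi_top_free_cube_range) auto
    then show ?thesis using xi_top_free_cube_add1[of "n - 1" k] 3 by simp
  qed
qed

lemma xi1_maximal_cube_dim_iff:
  "(\<exists>B C. maximal_filter_cube {1..1} (xi_cover 1) B C \<and> card C = k) \<longleftrightarrow> k = 1"
proof -
  have "\<not> xi_cover 1 x y" for x y unfolding xi_cover_iff zigzag_cover_def by auto
  then have "maximal_filter_cube {1..1} (xi_cover 1) B C \<longleftrightarrow> B = {} \<and> C = {1}" for B C
    unfolding maximal_filter_cube_def filter_cube_def by auto
  then show ?thesis by auto
qed

lemma card_dim_range: "card {k::nat. 2 * k \<le> n \<and> n \<le> 3 * k + 1} =
  (if n mod 6 = 4 then n div 6 + 2 else n div 6 + 1)"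
proof -
  have "{k. 2 * k \<le> n \<and> n \<le> 3 * k + 1} = {(n + 1) div 3..n div 2}" by auto
  then have "card {k. 2 * k \<le> n \<and> n \<le> 3 * k + 1} = n div 2 + 1 - (n + 1) div 3" by simp
  also have "\<dots> = (if n mod 6 = 4 then n div 6 + 2 else n div 6 + 1)"
  proof -
    define q r where "q = n div 6" and "r = n mod 6"
    then have "n = 6 * q + r" "r < 6" by auto
    then have "n div 2 = 3 * q + r div 2" "(n + 1) div 3 = 2 * q + (r + 1) div 3"
      "n mod 6 = r" "n div 6 = q" by auto
    moreover have "r = 0 \<or> r = 1 \<or> r = 2 \<or> r = 3 \<or> r = 4 \<or> r = 5" using \<open>r < 6\<close> by auto
    ultimately show ?thesis by auto
  qed
  finally show ?thesis .
qed

theorem mainTheorem15: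
  fixes n :: nat
  shows "H_nonzero_terms n = (if n mod 6 = 4 then n div 6 + 2 else n div 6 + 1)"
proof (cases "n = 1")
  case True
  then show ?thesis
    unfolding H_nonzero_terms_def h_neq_zero_iff True xi1_maximal_cube_dim_iff by simp
next
  case False
  show ?thesis
    unfolding H_nonzero_terms_def h_neq_zero_iff xi_maximal_cube_dim_iff[OF False]
    by (rule card_dim_range)
qed

end
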